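(* Let $k$ be a field of characteristic $0$, $R=k[x_1,\dots,x_n]$, $\ell=x_1+\dots+x_n$, let $d$ be a positive integer with $d\le n$, let $J=(x_1^2,\dots,x_n^2)$ and $G=J\colon(\ell^d)$ (equivalently, $G$ is the annihilator ideal of $e_{n-d}(X_1,\dots,X_n)$). Then $$G=J+\Big(\prod_{i=1}^{(n-d+1)/2}(x_{2i-1}-x_{2i})\Big)_{S_n}\quad\text{if } n+d \text{ is odd},$$ $$G=J+\Big(x_{n-d+1}\prod_{i=1}^{(n-d)/2}(x_{2i-1}-x_{2i})\Big)_{S_n}\quad\text{if } n+d \text{ is even}.$$ (That is, the products $(x_1-x_2)(x_3-x_4)\cdots(x_{n-d}-x_{n-d+1})$, respectively $(x_1-x_2)\cdots(x_{n-d-1}-x_{n-d})x_{n-d+1}$.)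
   Context: The symmetric group $S_n$ acts on $R$ by permuting the variables, and for $f\in R$, $(f)_{S_n}$ denotes the ideal generated by $\{\sigma(f)\mid\sigma\in S_n\}$. $R$ acts on $S=k[X_1,\dots,X_n]$ by $x_i\circ F=\partial F/\partial X_i$, and the annihilator ideal of $F\in S$ is $\{f\in R\mid f\circ F=0\}$; $e_m$ denotes the $m$-th elementary symmetric polynomial. An empty product equals $1$. *)

theory Defs
  imports "HOL-Library.Poly_Mapping" "HOL-Combinatorics.Permutations"
begin

text \<open>Variables are indexed by naturals;
the ring R = k[x_1,...,x_n] is the set of polynomials involving only x_1..x_n.\<close>

type_synonym 'k mpoly = "(nat \<Rightarrow>\<^sub>0 nat) \<Rightarrow>\<^sub>0 'k"

definition var :: "nat \<Rightarrow> 'k::comm_ring_1 mpoly" where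
  "var i = Poly_Mapping.single (Poly_Mapping.single i 1) 1"

definition polyR :: "nat \<Rightarrow> 'k::comm_ring_1 mpoly set" where
  "polyR n = {p :: 'k mpoly. \<forall>m \<in> Poly_Mapping.keys p. Poly_Mapping.keys m \<subseteq> {1..n}}"

definition ideal_gen :: "nat \<Rightarrow> 'k::comm_ring_1 mpoly set \<Rightarrow> 'k mpoly set" where
  "ideal_gen n S = {(\<Sum>j<(N::nat). c j * g j) | N c g.
      (\<forall>j<N. c j \<in> polyR n \<and> g j \<in> S)}"

text \<open>Action of a permutation of variables: the ring endomorphism x_i |-> x_(sigma i).\<close>
definition perm_act :: "(nat \<Rightarrow> nat) \<Rightarrow> 'k::comm_ring_1 mpoly \<Rightarrow> 'k mpoly" where
  "perm_act \<sigma> p = (\<Sum>m \<in> Poly_Mapping.keys p.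
      Poly_Mapping.single 0 (Poly_Mapping.lookup p m) *
      (\<Prod>i \<in> Poly_Mapping.keys m. var (\<sigma> i) ^ Poly_Mapping.lookup m i))"

text \<open>The S_n-orbit of f: {sigma(f) | sigma in S_n}; (f)_{S_n} is the ideal it generates.\<close>
definition Sn_orbit :: "nat \<Rightarrow> 'k::comm_ring_1 mpoly \<Rightarrow> 'k mpoly set" where
  "Sn_orbit n f = {perm_act \<sigma> f | \<sigma>. \<sigma> permutes {1..n}}"

definition J_gens :: "nat \<Rightarrow> 'k::comm_ring_1 mpoly set" where
  "J_gens n = {var i ^ 2 | i. i \<in> {1..n}}"

definition J_ideal :: "nat \<Rightarrow> 'k::comm_ring_1 mpoly set" where
  "J_ideal n = ideal_gen n (J_gens n)"

definition ell :: "nat \<Rightarrow> 'k::comm_ring_1 mpoly" where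
  "ell n = (\<Sum>i=1..n. var i)"

definition colon_ideal :: "nat \<Rightarrow> nat \<Rightarrow> 'k::comm_ring_1 mpoly set" where
  "colon_ideal n d = {f \<in> polyR n. f * ell n ^ d \<in> J_ideal n}"

end

theory Submission
  imports Defs
begin

text \<open>Let W (D_ideal n d below) be the ideal generated by J and all products
  D(M, P) = prod_{m in M} x_m * prod_{(a, b) in P} (x_a - x_b), over pairwise distinct indices
  with |M| + 2|P| > n - d. We show J : \<ell>^d = W.

  Modulo J, D(M, P) is killed by the sum of its own variables (x_m^2 \<in> J and
  (x_a - x_b)(x_a + x_b) \<in> J), so D(M, P) \<ell>^d \<equiv> D(M, P) \<ell>_U^d, where \<ell>_U is the sum of the
  fewer than d remaining variables; and \<ell>_U^d \<in> J. Hence W \<subseteq> J : \<ell>^d.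

  Conversely, induct on n. Write f = g + x h_0 + x^2 h_1 with x = x_n and g, h_0 free of x.
  Comparing coefficients of 1 and x in f (\<ell>' + x)^d modulo J gives, in n - 1 variables,
  g \<in> J : \<ell>'^d, h_0 \<ell>' + d g \<in> J : \<ell>'^(d-1) and h_0 \<in> J : \<ell>'^(d+1). Induction puts these in
  the corresponding W's, and the generators of those W's lift to W after multiplication by
  x or, up to a multiple of x, by \<ell>'. This yields d f \<in> W; dividing by d uses characteristic 0.

  Finally, modulo J each D(M, P) with |M| + 2|P| \<ge> r = n - d + 1 is a combination of those
  with |M| = r mod 2 and |P| = r div 2 (trade two factors x_a x_b for a pair x_a - x_b, and split
  a surplus pair x_a - x_b into x_a and x_b), and the latter are exactly the S_n-translates of
  the generator of the theorem.\<close>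

section \<open>Polynomials in the variables x_1, ..., x_n\<close>

lemma poly_mapping_eq_sum_single:
  "p = (\<Sum>m\<in>Poly_Mapping.keys p. Poly_Mapping.single m (Poly_Mapping.lookup p m))"
proof (rule poly_mapping_eqI)
  fix k
  show "Poly_Mapping.lookup p k =
    Poly_Mapping.lookup (\<Sum>m\<in>Poly_Mapping.keys p. Poly_Mapping.single m (Poly_Mapping.lookup p m)) k"
    unfolding lookup_sum lookup_single
    by (cases "k \<in> Poly_Mapping.keys p") (auto simp: when_def in_keys_iff)
qed

lemma var_power: "(var i :: 'k::comm_ring_1 mpoly) ^ k = Poly_Mapping.single (Poly_Mapping.single i k) 1"
proof (induction k)
  case (Suc k)
  have "(var i :: 'k mpoly) ^ Suc k =
      Poly_Mapping.single (Poly_Mapping.single i 1) 1 * Poly_Mapping.single (Poly_Mapping.single i k) 1"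
    by (simp only: power_Suc Suc.IH) (simp add: var_def)
  also have "\<dots> = Poly_Mapping.single (Poly_Mapping.single i (Suc k)) 1"
    by (simp add: mult_single single_add[symmetric])
  finally show ?case .
qed simp

lemma single_eq_const_mult_prod_vars:
  "Poly_Mapping.single m c = Poly_Mapping.single 0 (c::'k::comm_ring_1) *
     (\<Prod>i\<in>Poly_Mapping.keys m. var i ^ Poly_Mapping.lookup m i)"
proof -
  have "(\<Prod>i\<in>Poly_Mapping.keys m. (var i :: 'k mpoly) ^ Poly_Mapping.lookup m i)
      = (\<Prod>i\<in>Poly_Mapping.keys m. Poly_Mapping.single (Poly_Mapping.single i (Poly_Mapping.lookup m i)) 1)"
    by (simp add: var_power)
  also have "\<dots> = Poly_Mapping.single (\<Sum>i\<in>Poly_Mapping.keys m. Poly_Mapping.single i (Poly_Mapping.lookup m i)) 1"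
    by (induction rule: infinite_finite_induct) (auto simp: mult_single)
  also have "(\<Sum>i\<in>Poly_Mapping.keys m. Poly_Mapping.single i (Poly_Mapping.lookup m i)) = m"
    by (rule poly_mapping_eq_sum_single[symmetric])
  finally show ?thesis by (simp add: mult_single)
qed

lemma polyR_zero [simp]: "0 \<in> polyR n"
  and polyR_const [simp]: "Poly_Mapping.single 0 c \<in> polyR n"
  and polyR_one [simp]: "1 \<in> polyR n"
  by (simp_all add: polyR_def)

lemma polyR_of_nat [simp]: "of_nat k \<in> polyR n"
  by (metis polyR_const single_of_nat)

lemma polyR_single: "Poly_Mapping.keys m \<subseteq> {1..n} \<Longrightarrow> Poly_Mapping.single m c \<in> polyR n"
  by (simp add: polyR_def)

lemma polyR_var [simp]: "i \<in> {1..n} \<Longrightarrow> (var i :: 'k::comm_ring_1 mpoly) \<in> polyR n"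
  by (simp add: polyR_def var_def)

lemma polyR_add [simp]: "p \<in> polyR n \<Longrightarrow> q \<in> polyR n \<Longrightarrow> p + q \<in> polyR n"
  using keys_add[of p q] by (auto simp: polyR_def)

lemma polyR_uminus [simp]: "p \<in> polyR n \<Longrightarrow> - p \<in> polyR n"
  by (auto simp: polyR_def)

lemma polyR_diff [simp]: "p \<in> polyR n \<Longrightarrow> q \<in> polyR n \<Longrightarrow> p - q \<in> polyR n"
  using polyR_add[of p n "- q"] by simp

lemma polyR_mult [simp]:
  assumes "p \<in> polyR n" "q \<in> polyR n"
  shows "p * q \<in> polyR n"
  unfolding polyR_def
proof (intro CollectI ballI)
  fix m assume "m \<in> Poly_Mapping.keys (p * q)"
  then obtain a b where "m = a + b" "a \<in> Poly_Mapping.keys p" "b \<in> Poly_Mapping.keys q"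
    using keys_mult by blast
  then show "Poly_Mapping.keys m \<subseteq> {1..n}"
    using assms keys_add[of a b] unfolding polyR_def by blast
qed

lemma polyR_sum [simp]: "(\<And>i. i \<in> A \<Longrightarrow> f i \<in> polyR n) \<Longrightarrow> sum f A \<in> polyR n"
  by (induction A rule: infinite_finite_induct) auto

lemma polyR_prod [simp]: "(\<And>i. i \<in> A \<Longrightarrow> f i \<in> polyR n) \<Longrightarrow> prod f A \<in> polyR n"
  by (induction A rule: infinite_finite_induct) auto

lemma polyR_power [simp]: "p \<in> polyR n \<Longrightarrow> p ^ k \<in> polyR n"
  by (induction k) auto

lemma polyR_mono: "n \<le> n' \<Longrightarrow> p \<in> polyR n \<Longrightarrow> p \<in> polyR n'"
  by (fastforce simp: polyR_def)

lemma polyR_subset_Suc: "polyR n \<subseteq> polyR (Suc n)"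
  using polyR_mono[of n "Suc n"] by auto

lemma prod_vars_polyR [simp]: "M \<subseteq> {1..n} \<Longrightarrow> (\<Prod>m\<in>M. var m) \<in> (polyR n :: 'k::comm_ring_1 mpoly set)"
  by (rule polyR_prod) auto

lemma sum_vars_polyR [simp]: "U \<subseteq> {1..n} \<Longrightarrow> (\<Sum>i\<in>U. var i) \<in> (polyR n :: 'k::comm_ring_1 mpoly set)"
  by (rule polyR_sum) auto

lemma polyR_induct [consumes 1, case_names const var add mult]:
  fixes p :: "'k::comm_ring_1 mpoly"
  assumes "p \<in> polyR n"
    and const: "\<And>c. P (Poly_Mapping.single 0 c)"
    and var: "\<And>i. i \<in> {1..n} \<Longrightarrow> P (var i)"
    and add: "\<And>p q. p \<in> polyR n \<Longrightarrow> q \<in> polyR n \<Longrightarrow> P p \<Longrightarrow> P q \<Longrightarrow> P (p + q)"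
    and mult: "\<And>p q. p \<in> polyR n \<Longrightarrow> q \<in> polyR n \<Longrightarrow> P p \<Longrightarrow> P q \<Longrightarrow> P (p * q)"
  shows "P p"
proof -
  have prod: "P (prod f A) \<and> prod f A \<in> polyR n" if "\<And>i. i \<in> A \<Longrightarrow> P (f i) \<and> f i \<in> polyR n"
    for A and f :: "nat \<Rightarrow> 'k mpoly"
    using that by (induction A rule: infinite_finite_induct) (use const[of 1] in \<open>auto intro!: mult\<close>)
  have sum: "P (sum f A) \<and> sum f A \<in> polyR n" if "\<And>i. i \<in> A \<Longrightarrow> P (f i) \<and> f i \<in> polyR n"
    for A and f :: "(nat \<Rightarrow>\<^sub>0 nat) \<Rightarrow> 'k mpoly"
    using that by (induction A rule: infinite_finite_induct) (use const[of 0] in \<open>auto intro!: add\<close>)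
  have var_power: "P (var i ^ k)" if "i \<in> {1..n}" for i k
    by (induction k) (use const[of 1] var[OF that] that in \<open>auto intro: mult[of "var i"]\<close>)
  have "P (Poly_Mapping.single m c)" if "m \<in> Poly_Mapping.keys p" for m c
  proof -
    have keys_m: "Poly_Mapping.keys m \<subseteq> {1..n}" using assms(1) that by (auto simp: polyR_def)
    then have "P (\<Prod>i\<in>Poly_Mapping.keys m. var i ^ Poly_Mapping.lookup m i) \<and>
        (\<Prod>i\<in>Poly_Mapping.keys m. (var i :: 'k mpoly) ^ Poly_Mapping.lookup m i) \<in> polyR n"
      by (intro prod conjI var_power polyR_power polyR_var) auto
    then show ?thesis
      using mult[of "Poly_Mapping.single 0 c"] const[of c]
      by (simp add: single_eq_const_mult_prod_vars[of m c])
  qed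
  moreover have "Poly_Mapping.single m c \<in> polyR n" if "m \<in> Poly_Mapping.keys p" for m c
    using assms(1) that by (auto simp: polyR_def intro: polyR_single)
  ultimately show ?thesis
    by (subst poly_mapping_eq_sum_single) (rule conjunct1[OF sum], auto)
qed

lemma polyR_Suc_decomp:
  fixes p :: "'k::comm_ring_1 mpoly"
  assumes "p \<in> polyR (Suc N)"
  obtains g h0 h1 where "g \<in> polyR N" "h0 \<in> polyR N" "h1 \<in> polyR (Suc N)"
    "p = g + var (Suc N) * h0 + var (Suc N)^2 * h1"
proof -
  let ?x = "var (Suc N) :: 'k mpoly"
  let ?P = "\<lambda>p. \<exists>g h0 h1. g \<in> polyR N \<and> h0 \<in> polyR N \<and> h1 \<in> polyR (Suc N) \<and>
    p = g + ?x * h0 + ?x^2 * h1"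
  have "?P p"
    using assms
  proof (induction rule: polyR_induct)
    case (const c)
    show ?case by (rule exI[of _ "Poly_Mapping.single 0 c"], rule exI[of _ 0], rule exI[of _ 0]) simp
  next
    case (var i)
    show ?case
    proof (cases "i = Suc N")
      case True
      show ?thesis by (rule exI[of _ 0], rule exI[of _ 1], rule exI[of _ 0]) (simp add: True)
    next
      case False
      then show ?thesis using var by (intro exI[of _ "var i"] exI[of _ 0]) auto
    qed
  next
    case (add p q)
    then obtain g h0 h1 g' h0' h1' where
      "g \<in> polyR N" "h0 \<in> polyR N" "h1 \<in> polyR (Suc N)" "p = g + ?x * h0 + ?x^2 * h1"
      "g' \<in> polyR N" "h0' \<in> polyR N" "h1' \<in> polyR (Suc N)" "q = g' + ?x * h0' + ?x^2 * h1'"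
      by blast
    then show ?case by (intro exI[of _ "g + g'"] exI[of _ "h0 + h0'"] exI[of _ "h1 + h1'"])
        (simp add: algebra_simps)
  next
    case (mult p q)
    then obtain g h0 h1 g' h0' h1' where
      R: "g \<in> polyR N" "h0 \<in> polyR N" "h1 \<in> polyR (Suc N)"
         "g' \<in> polyR N" "h0' \<in> polyR N" "h1' \<in> polyR (Suc N)" and
      pq: "p = g + ?x * h0 + ?x^2 * h1" "q = g' + ?x * h0' + ?x^2 * h1'"
      by blast
    define h1'' where "h1'' = h0 * h0' + g * h1' + h1 * g' + ?x * (h0 * h1' + h1 * h0') + ?x^2 * h1 * h1'"
    have "g \<in> polyR (Suc N)" "h0 \<in> polyR (Suc N)" "g' \<in> polyR (Suc N)" "h0' \<in> polyR (Suc N)"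
      using R polyR_subset_Suc by auto
    then have "h1'' \<in> polyR (Suc N)"
      using R by (simp add: h1''_def)
    moreover have "p * q = g * g' + ?x * (g * h0' + h0 * g') + ?x^2 * h1''"
      unfolding pq h1''_def by (simp add: algebra_simps power2_eq_square)
    ultimately show ?case using R by (intro exI[of _ "g * g'"] exI[of _ "g * h0' + h0 * g'"] exI[of _ h1'']) auto
  qed
  then show thesis using that by blast
qed

lemma binomial_mod_square:
  fixes a b :: "'k::comm_ring_1 mpoly"
  assumes "a \<in> polyR n" "b \<in> polyR n"
  obtains c where "c \<in> polyR n" "(a + b) ^ d = a ^ d + of_nat d * b * a ^ (d - 1) + b^2 * c"
proof -
  have "\<exists>c \<in> polyR n. (a + b) ^ d = a ^ d + of_nat d * b * a ^ (d - 1) + b^2 * c"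
  proof (induction d)
    case (Suc d)
    then obtain c where c: "c \<in> polyR n" "(a + b) ^ d = a ^ d + of_nat d * b * a ^ (d - 1) + b^2 * c"
      by blast
    show ?case
    proof (cases d)
      case (Suc e)
      have "(a + b) ^ Suc d = (a ^ d + of_nat d * b * a ^ (d - 1) + b^2 * c) * (a + b)"
        using c by simp
      also have "\<dots> = a ^ Suc d + of_nat (Suc d) * b * a ^ (Suc d - 1)
          + b^2 * (of_nat d * a ^ e + c * (a + b))"
        using Suc by (simp add: algebra_simps power2_eq_square)
      finally show ?thesis using c assms by (intro bexI[of _ "of_nat d * a ^ e + c * (a + b)"]) auto
    qed (auto intro: bexI[of _ 0])
  qed (auto intro: bexI[of _ 0])
  then show thesis using that by blast
qed

section \<open>Generated ideals\<close>

lemma ideal_genI: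
  fixes N :: nat
  assumes "p = (\<Sum>j<N. c j * g j)" "\<forall>j<N. c j \<in> polyR n \<and> g j \<in> S"
  shows "p \<in> ideal_gen n S"
  using assms unfolding ideal_gen_def by blast

lemma ideal_genE:
  assumes "p \<in> ideal_gen n S"
  obtains N :: nat and c g where "p = (\<Sum>j<N. c j * g j)" "\<forall>j<N. c j \<in> polyR n \<and> g j \<in> S"
  using assms unfolding ideal_gen_def by blast

lemma ideal_gen_zero [simp]: "0 \<in> ideal_gen n S"
  by (rule ideal_genI[where N = 0]) auto

lemma ideal_gen_base: "g \<in> S \<Longrightarrow> g \<in> ideal_gen n S"
  by (rule ideal_genI[where N = 1 and c = "\<lambda>_. 1" and g = "\<lambda>_. g"]) auto

lemma ideal_gen_add:
  assumes "p \<in> ideal_gen n S" "q \<in> ideal_gen n S"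
  shows "p + q \<in> ideal_gen n S"
proof -
  obtain N1 :: nat and c1 g1 where p: "p = (\<Sum>j<N1. c1 j * g1 j)" "\<forall>j<N1. c1 j \<in> polyR n \<and> g1 j \<in> S"
    using assms(1) by (rule ideal_genE)
  obtain N2 :: nat and c2 g2 where q: "q = (\<Sum>j<N2. c2 j * g2 j)" "\<forall>j<N2. c2 j \<in> polyR n \<and> g2 j \<in> S"
    using assms(2) by (rule ideal_genE)
  define c where "c j = (if j < N1 then c1 j else c2 (j - N1))" for j
  define g where "g j = (if j < N1 then g1 j else g2 (j - N1))" for j
  have "(\<Sum>j<N1 + N2. c j * g j) = (\<Sum>j<N1. c j * g j) + (\<Sum>j<N2. c (N1 + j) * g (N1 + j))"
    by (induction N2) (auto simp: add.assoc)
  also have "\<dots> = p + q" by (simp add: p q c_def g_def)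
  finally show ?thesis
    using p(2) q(2) by (intro ideal_genI[where N = "N1 + N2" and c = c and g = g]) (auto simp: c_def g_def)
qed

lemma ideal_gen_mult:
  assumes "p \<in> ideal_gen n S" "r \<in> polyR n"
  shows "r * p \<in> ideal_gen n S"
proof -
  obtain N :: nat and c g where p: "p = (\<Sum>j<N. c j * g j)" "\<forall>j<N. c j \<in> polyR n \<and> g j \<in> S"
    using assms(1) by (rule ideal_genE)
  have "r * p = (\<Sum>j<N. (r * c j) * g j)" by (simp add: p sum_distrib_left mult.assoc)
  then show ?thesis
    using p(2) assms(2) by (intro ideal_genI[where c = "\<lambda>j. r * c j" and g = g]) auto
qed

lemma ideal_gen_mult_right: "p \<in> ideal_gen n S \<Longrightarrow> r \<in> polyR n \<Longrightarrow> p * r \<in> ideal_gen n S"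
  using ideal_gen_mult[of p n S r] by (simp add: mult.commute)

lemma ideal_gen_diff: "p \<in> ideal_gen n S \<Longrightarrow> q \<in> ideal_gen n S \<Longrightarrow> p - q \<in> ideal_gen n S"
  using ideal_gen_add[of p n S "- q"] ideal_gen_mult[of q n S "- 1"] by simp

lemma ideal_gen_sum: "(\<And>i. i \<in> A \<Longrightarrow> f i \<in> ideal_gen n S) \<Longrightarrow> sum f A \<in> ideal_gen n S"
  by (induction A rule: infinite_finite_induct) (auto intro: ideal_gen_add)

lemma ideal_gen_least:
  assumes "S \<subseteq> I" "0 \<in> I" "\<And>p q. p \<in> I \<Longrightarrow> q \<in> I \<Longrightarrow> p + q \<in> I"
    "\<And>r p. r \<in> polyR n \<Longrightarrow> p \<in> I \<Longrightarrow> r * p \<in> I"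
  shows "ideal_gen n S \<subseteq> I"
proof
  fix p assume "p \<in> ideal_gen n S"
  then obtain N :: nat and c g where p: "p = (\<Sum>j<N. c j * g j)" "\<forall>j<N. c j \<in> polyR n \<and> g j \<in> S"
    by (rule ideal_genE)
  have "(\<Sum>j<M. c j * g j) \<in> I" if "M \<le> N" for M
    using that
  proof (induction M)
    case (Suc M)
    then have "c M \<in> polyR n" "g M \<in> I" using assms(1) p(2) by auto
    then have "c M * g M \<in> I" by (rule assms(4))
    then show ?case using Suc assms(3) by simp
  qed (simp add: assms(2))
  then show "p \<in> I" using p(1) by simp
qed

lemma ideal_gen_subset: "S \<subseteq> ideal_gen n T \<Longrightarrow> ideal_gen n S \<subseteq> ideal_gen n T"
  by (rule ideal_gen_least) (auto intro: ideal_gen_add ideal_gen_mult)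

lemma ideal_gen_subset_polyR: "S \<subseteq> polyR n \<Longrightarrow> ideal_gen n S \<subseteq> polyR n"
  by (rule ideal_gen_least) auto

lemma ideal_gen_mono: "S \<subseteq> T \<Longrightarrow> n \<le> n' \<Longrightarrow> ideal_gen n S \<subseteq> ideal_gen n' T"
  unfolding ideal_gen_def by (blast intro: polyR_mono)

section \<open>The ideal J\<close>

lemma J_ideal_subset_polyR: "J_ideal n \<subseteq> (polyR n :: 'k::comm_ring_1 mpoly set)"
  unfolding J_ideal_def by (rule ideal_gen_subset_polyR) (auto simp: J_gens_def)

lemma J_ideal_zero [simp]: "0 \<in> J_ideal n"
  and J_ideal_add: "p \<in> J_ideal n \<Longrightarrow> q \<in> J_ideal n \<Longrightarrow> p + q \<in> J_ideal n"
  and J_ideal_diff: "p \<in> J_ideal n \<Longrightarrow> q \<in> J_ideal n \<Longrightarrow> p - q \<in> J_ideal n"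
  and J_ideal_mult: "p \<in> J_ideal n \<Longrightarrow> r \<in> polyR n \<Longrightarrow> r * p \<in> J_ideal n"
  and J_ideal_mult_right: "p \<in> J_ideal n \<Longrightarrow> r \<in> polyR n \<Longrightarrow> p * r \<in> J_ideal n"
  and J_ideal_sum: "(\<And>i. i \<in> A \<Longrightarrow> f i \<in> J_ideal n) \<Longrightarrow> sum f A \<in> J_ideal n"
  unfolding J_ideal_def
  by (simp_all add: ideal_gen_add ideal_gen_diff ideal_gen_mult ideal_gen_mult_right ideal_gen_sum)

lemma mult_var_square_in_J_ideal:
  "i \<in> {1..n} \<Longrightarrow> c \<in> polyR n \<Longrightarrow> c * var i ^ 2 \<in> (J_ideal n :: 'k::comm_ring_1 mpoly set)"
  unfolding J_ideal_def by (rule ideal_gen_mult) (auto simp: J_gens_def intro: ideal_gen_base)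

lemma J_ideal_subset_Suc: "J_ideal n \<subseteq> (J_ideal (Suc n) :: 'k::comm_ring_1 mpoly set)"
  unfolding J_ideal_def by (rule ideal_gen_mono) (auto simp: J_gens_def)

lemma J_ideal_keys:
  fixes p :: "'k::comm_ring_1 mpoly"
  assumes "p \<in> J_ideal n" "m \<in> Poly_Mapping.keys p"
  shows "\<exists>i. 2 \<le> Poly_Mapping.lookup m i"
proof -
  let ?I = "{p :: 'k mpoly. \<forall>m \<in> Poly_Mapping.keys p. \<exists>i. 2 \<le> Poly_Mapping.lookup m i}"
  have "J_ideal n \<subseteq> ?I"
    unfolding J_ideal_def
  proof (rule ideal_gen_least)
    show "J_gens n \<subseteq> ?I"
    proof
      fix g :: "'k mpoly" assume "g \<in> J_gens n"
      then obtain i where "g = var i ^ 2" by (auto simp: J_gens_def)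
      then show "g \<in> ?I" by (auto simp: var_power intro!: exI[of _ i])
    qed
  next
    fix p q :: "'k mpoly" assume "p \<in> ?I" "q \<in> ?I"
    then show "p + q \<in> ?I" using keys_add[of p q] by auto
  next
    fix r p :: "'k mpoly" assume p: "p \<in> ?I"
    have "\<exists>i. 2 \<le> Poly_Mapping.lookup m i" if mk: "m \<in> Poly_Mapping.keys (r * p)" for m
    proof -
      obtain a b where m: "m = a + b" and "b \<in> Poly_Mapping.keys p"
        using keys_mult mk by blast
      then obtain i where "2 \<le> Poly_Mapping.lookup b i" using p by blast
      then have "2 \<le> Poly_Mapping.lookup m i" by (simp add: m lookup_add)
      then show ?thesis ..
    qed
    then show "r * p \<in> ?I" by blast
  qed simp
  then show ?thesis using assms by blast
qed

lemma single_in_J_ideal: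
  assumes "Poly_Mapping.keys m \<subseteq> {1..n}" "2 \<le> Poly_Mapping.lookup m i"
  shows "Poly_Mapping.single m c \<in> (J_ideal n :: 'k::comm_ring_1 mpoly set)"
proof -
  have "i \<in> Poly_Mapping.keys m" using assms(2) by (simp add: in_keys_iff)
  then have i: "i \<in> {1..n}" using assms(1) by blast
  define m' where "m' = Poly_Mapping.update i (Poly_Mapping.lookup m i - 2) m"
  have "m' + Poly_Mapping.single i 2 = m"
    by (rule poly_mapping_eqI) (use assms(2) in \<open>auto simp: m'_def lookup_add lookup_update lookup_single when_def\<close>)
  then have "Poly_Mapping.single m c = Poly_Mapping.single m' c * var i ^ 2"
    by (simp add: var_power mult_single)
  moreover have "Poly_Mapping.keys m' \<subseteq> {1..n}" using assms(1) i by (auto simp: m'_def keys_update)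
  ultimately show ?thesis using i by (simp add: mult_var_square_in_J_ideal polyR_single)
qed

lemma J_ideal_iff:
  "p \<in> (J_ideal n :: 'k::comm_ring_1 mpoly set) \<longleftrightarrow>
     p \<in> polyR n \<and> (\<forall>m \<in> Poly_Mapping.keys p. \<exists>i. 2 \<le> Poly_Mapping.lookup m i)"
proof
  assume "p \<in> J_ideal n"
  then show "p \<in> polyR n \<and> (\<forall>m \<in> Poly_Mapping.keys p. \<exists>i. 2 \<le> Poly_Mapping.lookup m i)"
    using J_ideal_subset_polyR J_ideal_keys by blast
next
  assume p: "p \<in> polyR n \<and> (\<forall>m \<in> Poly_Mapping.keys p. \<exists>i. 2 \<le> Poly_Mapping.lookup m i)"
  have "Poly_Mapping.single m (Poly_Mapping.lookup p m) \<in> J_ideal n" if m: "m \<in> Poly_Mapping.keys p" for m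
  proof -
    obtain i where "2 \<le> Poly_Mapping.lookup m i" using p m by blast
    moreover have "Poly_Mapping.keys m \<subseteq> {1..n}" using p m by (auto simp: polyR_def)
    ultimately show ?thesis by (rule single_in_J_ideal[rotated])
  qed
  then show "p \<in> J_ideal n"
    by (subst poly_mapping_eq_sum_single) (auto intro: J_ideal_sum)
qed

lemma lookup_single_mult:
  fixes e :: "nat \<Rightarrow>\<^sub>0 nat"
  shows "Poly_Mapping.lookup (Poly_Mapping.single e (c::'k::comm_ring_1) * b) (e + m) = c * Poly_Mapping.lookup b m"
proof -
  have "Poly_Mapping.single e c * b =
      (\<Sum>m'\<in>Poly_Mapping.keys b. Poly_Mapping.single (e + m') (c * Poly_Mapping.lookup b m'))"
    by (subst poly_mapping_eq_sum_single[of b]) (simp add: sum_distrib_left mult_single)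
  then have "Poly_Mapping.lookup (Poly_Mapping.single e c * b) (e + m)
     = (\<Sum>m'\<in>Poly_Mapping.keys b. (c * Poly_Mapping.lookup b m' when e + m' = e + m))"
    by (simp add: lookup_sum lookup_single)
  also have "\<dots> = (\<Sum>m'\<in>Poly_Mapping.keys b. (c * Poly_Mapping.lookup b m' when m' = m))"
    by (rule sum.cong) (auto simp: when_def dest: add_left_imp_eq)
  finally show ?thesis by (cases "m \<in> Poly_Mapping.keys b") (auto simp: when_def in_keys_iff)
qed

lemma lookup_var_mult_eq_0:
  assumes "Poly_Mapping.lookup k i = 0"
  shows "Poly_Mapping.lookup ((var i :: 'k::comm_ring_1 mpoly) * b) k = 0"
proof -
  have "k \<notin> Poly_Mapping.keys (var i * b)"
  proof
    assume "k \<in> Poly_Mapping.keys ((var i :: 'k mpoly) * b)"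
    then obtain a c where "k = a + c" "a \<in> Poly_Mapping.keys (var i :: 'k mpoly)"
      using keys_mult by blast
    then show False using assms by (auto simp: var_def lookup_add)
  qed
  then show ?thesis by (simp add: in_keys_iff)
qed

lemma polyR_lookup_Suc_eq_0:
  "p \<in> polyR N \<Longrightarrow> m \<in> Poly_Mapping.keys p \<Longrightarrow> Poly_Mapping.lookup m (Suc N) = 0"
  by (force simp: polyR_def in_keys_iff)

text \<open>The monomials of a and of x b are disjoint, with x = x_{N+1}.\<close>
lemma J_ideal_Suc_split:
  fixes a b :: "'k::comm_ring_1 mpoly"
  assumes a: "a \<in> polyR N" and b: "b \<in> polyR N" and ab: "a + var (Suc N) * b \<in> J_ideal (Suc N)"
  shows "a \<in> J_ideal N" "b \<in> J_ideal N"
proof -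
  let ?x = "var (Suc N) :: 'k mpoly"
  have ab_keys: "\<exists>i. 2 \<le> Poly_Mapping.lookup m i" if "m \<in> Poly_Mapping.keys (a + ?x * b)" for m
    using J_ideal_keys[OF ab that] .
  have "\<exists>i. 2 \<le> Poly_Mapping.lookup m i" if m: "m \<in> Poly_Mapping.keys a" for m
  proof -
    have "Poly_Mapping.lookup (?x * b) m = 0"
      using polyR_lookup_Suc_eq_0[OF a m] by (rule lookup_var_mult_eq_0)
    then have "m \<in> Poly_Mapping.keys (a + ?x * b)" using m by (simp add: in_keys_iff lookup_add)
    then show ?thesis by (rule ab_keys)
  qed
  then show "a \<in> J_ideal N" using a by (simp add: J_ideal_iff)
  have "\<exists>i. 2 \<le> Poly_Mapping.lookup m i" if m: "m \<in> Poly_Mapping.keys b" for m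
  proof -
    let ?e = "Poly_Mapping.single (Suc N) (1::nat)"
    have "?e + m \<notin> Poly_Mapping.keys a"
      using polyR_lookup_Suc_eq_0[OF a, of "?e + m"] by (auto simp: lookup_add)
    then have "Poly_Mapping.lookup (a + ?x * b) (?e + m) = Poly_Mapping.lookup b m"
      by (simp add: var_def lookup_add lookup_single_mult in_keys_iff)
    then have "?e + m \<in> Poly_Mapping.keys (a + ?x * b)" using m by (simp add: in_keys_iff)
    then obtain i where i: "2 \<le> Poly_Mapping.lookup (?e + m) i" using ab_keys by blast
    moreover have "Poly_Mapping.lookup m (Suc N) = 0" using polyR_lookup_Suc_eq_0[OF b m] .
    ultimately have "2 \<le> Poly_Mapping.lookup m i"
      by (cases "i = Suc N") (auto simp: lookup_add lookup_single when_def)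
    then show ?thesis ..
  qed
  then show "b \<in> J_ideal N" using b by (simp add: J_ideal_iff)
qed

section \<open>The colon ideal\<close>

lemma ell_polyR [simp]: "(ell n :: 'k::comm_ring_1 mpoly) \<in> polyR n"
  unfolding ell_def by (rule sum_vars_polyR) simp

lemma ell_Suc: "(ell (Suc N) :: 'k::comm_ring_1 mpoly) = ell N + var (Suc N)"
  by (simp add: ell_def)

lemma J_ideal_subset_colon_ideal: "J_ideal n \<subseteq> (colon_ideal n d :: 'k::comm_ring_1 mpoly set)"
proof
  fix p :: "'k mpoly" assume "p \<in> J_ideal n"
  then show "p \<in> colon_ideal n d"
    using J_ideal_subset_polyR by (auto simp: colon_ideal_def intro: J_ideal_mult_right)
qed

lemma colon_ideal_add:
  "p \<in> colon_ideal n d \<Longrightarrow> q \<in> colon_ideal n d \<Longrightarrow> p + q \<in> (colon_ideal n d :: 'k::comm_ring_1 mpoly set)"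
  by (auto simp: colon_ideal_def distrib_right intro: J_ideal_add)

lemma colon_ideal_mult:
  "r \<in> polyR n \<Longrightarrow> p \<in> colon_ideal n d \<Longrightarrow> r * p \<in> (colon_ideal n d :: 'k::comm_ring_1 mpoly set)"
  by (auto simp: colon_ideal_def mult.assoc intro: J_ideal_mult)

lemma colon_ideal_diff:
  "p \<in> colon_ideal n d \<Longrightarrow> q \<in> colon_ideal n d \<Longrightarrow> p - q \<in> (colon_ideal n d :: 'k::comm_ring_1 mpoly set)"
  using colon_ideal_add[of p n d "- q"] colon_ideal_mult[of "- 1" n q d] by simp

text \<open>Reading f (\<ell> + x)^d modulo x^2, where x = x_{N+1} and \<ell> = x_1 + ... + x_N, via
  (\<ell> + x)^d \<equiv> \<ell>^d + d x \<ell>^(d-1).\<close>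
lemma colon_ideal_Suc_coeffs:
  fixes g h0 :: "'k::comm_ring_1 mpoly"
  assumes g: "g \<in> polyR N" and h0: "h0 \<in> polyR N" and h1: "h1 \<in> polyR (Suc N)"
    and f: "g + var (Suc N) * h0 + var (Suc N)^2 * h1 \<in> colon_ideal (Suc N) (Suc e)"
  shows "g \<in> colon_ideal N (Suc e)"
    and "h0 * ell N + of_nat (Suc e) * g \<in> colon_ideal N e"
    and "h0 \<in> colon_ideal N (Suc (Suc e))"
proof -
  let ?x = "var (Suc N) :: 'k mpoly" and ?L = "ell N :: 'k mpoly" and ?d = "Suc e"
  have R: "?L \<in> polyR (Suc N)" "?x \<in> polyR (Suc N)" "g \<in> polyR (Suc N)" "h0 \<in> polyR (Suc N)"
    using g h0 polyR_subset_Suc[of N] by auto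
  obtain c where c: "c \<in> polyR (Suc N)" "(?L + ?x) ^ ?d = ?L ^ ?d + of_nat ?d * ?x * ?L ^ e + ?x^2 * c"
    using binomial_mod_square[OF R(1,2), of ?d] by auto
  define q where "q = g * c + h0 * (of_nat ?d * ?L ^ e) + h0 * ?x * c + h1 * (?L + ?x) ^ ?d"
  define r where "r = g * ?L ^ ?d + ?x * (h0 * ?L ^ ?d + of_nat ?d * g * ?L ^ e)"
  have "(g + ?x * h0 + ?x^2 * h1) * ell (Suc N) ^ ?d = r + q * ?x^2"
    unfolding ell_Suc c(2) q_def r_def by (simp add: algebra_simps power2_eq_square)
  then have "r = (g + ?x * h0 + ?x^2 * h1) * ell (Suc N) ^ ?d - q * ?x^2"
    by simp
  moreover have "q * ?x^2 \<in> J_ideal (Suc N)"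
    using R c h1 by (intro mult_var_square_in_J_ideal) (auto simp: q_def)
  ultimately have r: "r \<in> J_ideal (Suc N)"
    using f by (simp add: colon_ideal_def J_ideal_diff)
  have "g * ?L ^ ?d \<in> polyR N" "h0 * ?L ^ ?d + of_nat ?d * g * ?L ^ e \<in> polyR N"
    using g h0 by simp_all
  from J_ideal_Suc_split[OF this r[unfolded r_def]]
  have J: "g * ?L ^ ?d \<in> J_ideal N" "h0 * ?L ^ ?d + of_nat ?d * g * ?L ^ e \<in> J_ideal N" .
  then show "g \<in> colon_ideal N ?d" using g by (simp add: colon_ideal_def)
  have "(h0 * ?L + of_nat ?d * g) * ?L ^ e = h0 * ?L ^ ?d + of_nat ?d * g * ?L ^ e"
    by (simp add: algebra_simps)
  then show "h0 * ?L + of_nat ?d * g \<in> colon_ideal N e" using g h0 J(2) by (simp add: colon_ideal_def)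
  have "h0 * ?L ^ Suc ?d = ?L * (h0 * ?L ^ ?d + of_nat ?d * g * ?L ^ e) - of_nat ?d * (g * ?L ^ ?d)"
    by (simp add: algebra_simps)
  moreover have "?L * (h0 * ?L ^ ?d + of_nat ?d * g * ?L ^ e) \<in> J_ideal N" "of_nat ?d * (g * ?L ^ ?d) \<in> J_ideal N"
    using J by (auto intro: J_ideal_mult)
  ultimately show "h0 \<in> colon_ideal N (Suc ?d)" using h0 by (simp add: colon_ideal_def J_ideal_diff)
qed

lemma colon_ideal_of_var_Suc_mult:
  fixes h :: "'k::comm_ring_1 mpoly"
  assumes "h \<in> polyR N" "var (Suc N) * h \<in> colon_ideal (Suc N) (Suc e)"
  shows "h \<in> colon_ideal N (Suc e)"
proof -
  have "h * ell N + of_nat (Suc e) * 0 \<in> colon_ideal N e"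
    using colon_ideal_Suc_coeffs(2)[of 0 N h 0 e] assms by simp
  then show ?thesis using assms(1) by (simp add: colon_ideal_def mult.assoc)
qed

section \<open>The ideal generated by J and the products D(M, P)\<close>

definition pair_indices :: "(nat \<times> nat) list \<Rightarrow> nat list" where
  "pair_indices ps = concat (map (\<lambda>(a, b). [a, b]) ps)"

definition pair_diff_prod :: "(nat \<times> nat) list \<Rightarrow> 'k::comm_ring_1 mpoly" where
  "pair_diff_prod ps = prod_list (map (\<lambda>(a, b). var a - var b) ps)"

definition D_poly :: "nat set \<Rightarrow> (nat \<times> nat) list \<Rightarrow> 'k::comm_ring_1 mpoly" where
  "D_poly M ps = (\<Prod>m\<in>M. var m) * pair_diff_prod ps"

definition D_admissible :: "nat \<Rightarrow> nat set \<Rightarrow> (nat \<times> nat) list \<Rightarrow> bool" where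
  "D_admissible n M ps \<longleftrightarrow> finite M \<and> M \<subseteq> {1..n} \<and> distinct (pair_indices ps) \<and>
     set (pair_indices ps) \<subseteq> {1..n} \<and> M \<inter> set (pair_indices ps) = {}"

definition D_gens :: "nat \<Rightarrow> nat \<Rightarrow> 'k::comm_ring_1 mpoly set" where
  "D_gens n d = {D_poly M ps | M ps. D_admissible n M ps \<and> n < card M + 2 * length ps + d}"

definition D_ideal :: "nat \<Rightarrow> nat \<Rightarrow> 'k::comm_ring_1 mpoly set" where
  "D_ideal n d = ideal_gen n (J_gens n \<union> D_gens n d)"

lemma pair_indices_simps [simp]:
  "pair_indices [] = []" "pair_indices ((a, b) # ps) = a # b # pair_indices ps"
  "pair_indices (ps @ qs) = pair_indices ps @ pair_indices qs"
  by (simp_all add: pair_indices_def)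

lemma length_pair_indices [simp]: "length (pair_indices ps) = 2 * length ps"
  by (induction ps) auto

lemma pair_diff_prod_simps [simp]:
  "pair_diff_prod [] = 1" "pair_diff_prod ((a, b) # ps) = (var a - var b) * pair_diff_prod ps"
  "pair_diff_prod (ps @ qs) = pair_diff_prod ps * (pair_diff_prod qs :: 'k::comm_ring_1 mpoly)"
  by (simp_all add: pair_diff_prod_def)

lemma D_admissibleD:
  assumes "D_admissible n M ps"
  shows "finite M" "M \<subseteq> {1..n}" "distinct (pair_indices ps)" "set (pair_indices ps) \<subseteq> {1..n}"
    "M \<inter> set (pair_indices ps) = {}"
  using assms by (auto simp: D_admissible_def)

lemma card_D_admissible_support:
  "D_admissible n M ps \<Longrightarrow> card (M \<union> set (pair_indices ps)) = card M + 2 * length ps"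
  by (simp add: D_admissible_def card_Un_disjoint distinct_card)

lemma pair_diff_prod_polyR: "set (pair_indices ps) \<subseteq> {1..n} \<Longrightarrow> pair_diff_prod ps \<in> polyR n"
  by (induction ps) auto

lemma D_poly_polyR: "D_admissible n M ps \<Longrightarrow> D_poly M ps \<in> polyR n"
  unfolding D_admissible_def D_poly_def by (intro polyR_mult pair_diff_prod_polyR prod_vars_polyR) auto

text \<open>(x_a - x_b)(x_a + x_b) = x_a^2 - x_b^2.\<close>
lemma pair_diff_prod_mult_sum_in_J_ideal:
  "distinct (pair_indices ps) \<Longrightarrow> set (pair_indices ps) \<subseteq> {1..n} \<Longrightarrow>
   pair_diff_prod ps * (\<Sum>i\<in>set (pair_indices ps). var i) \<in> (J_ideal n :: 'k::comm_ring_1 mpoly set)"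
proof (induction ps)
  case (Cons p ps)
  obtain a b where p: "p = (a, b)" by fastforce
  have ab: "a \<in> {1..n}" "b \<in> {1..n}" "a \<noteq> b" "a \<notin> set (pair_indices ps)" "b \<notin> set (pair_indices ps)"
    using Cons.prems by (auto simp: p)
  have P: "pair_diff_prod ps \<in> (polyR n :: 'k mpoly set)"
    using Cons.prems by (intro pair_diff_prod_polyR) (auto simp: p)
  have IH: "pair_diff_prod ps * (\<Sum>i\<in>set (pair_indices ps). var i) \<in> (J_ideal n :: 'k mpoly set)"
    using Cons by (auto simp: p)
  have "pair_diff_prod (p # ps) * (\<Sum>i\<in>set (pair_indices (p # ps)). (var i :: 'k mpoly))
     = pair_diff_prod ps * var a ^ 2 - pair_diff_prod ps * var b ^ 2
       + (var a - var b) * (pair_diff_prod ps * (\<Sum>i\<in>set (pair_indices ps). var i))"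
    using ab by (simp add: p algebra_simps power2_eq_square)
  then show ?case
    using ab P IH by (auto intro!: J_ideal_add J_ideal_diff J_ideal_mult mult_var_square_in_J_ideal)
qed simp

lemma D_poly_mult_sum_in_J_ideal:
  assumes "D_admissible n M ps"
  shows "D_poly M ps * (\<Sum>i\<in>M \<union> set (pair_indices ps). var i) \<in> (J_ideal n :: 'k::comm_ring_1 mpoly set)"
proof -
  note adm = D_admissibleD[OF assms]
  have "D_poly M ps * var m \<in> (J_ideal n :: 'k mpoly set)" if m: "m \<in> M" for m
  proof -
    have "D_poly M ps * var m = ((\<Prod>i\<in>M - {m}. var i) * pair_diff_prod ps) * (var m :: 'k mpoly)^2"
      using adm(1) m by (simp add: D_poly_def prod.remove power2_eq_square algebra_simps)
    moreover have "(\<Prod>i\<in>M - {m}. var i) * pair_diff_prod ps \<in> (polyR n :: 'k mpoly set)"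
      using adm by (intro polyR_mult prod_vars_polyR pair_diff_prod_polyR) auto
    moreover have "m \<in> {1..n}" using adm(2) m by blast
    ultimately show ?thesis by (simp add: mult_var_square_in_J_ideal)
  qed
  then have "D_poly M ps * (\<Sum>i\<in>M. var i) \<in> (J_ideal n :: 'k mpoly set)"
    by (simp add: sum_distrib_left J_ideal_sum)
  moreover have "D_poly M ps * (\<Sum>i\<in>set (pair_indices ps). var i) \<in> (J_ideal n :: 'k mpoly set)"
    using J_ideal_mult[OF pair_diff_prod_mult_sum_in_J_ideal[OF adm(3,4)] prod_vars_polyR[OF adm(2)]]
    by (simp add: D_poly_def mult.assoc)
  ultimately show ?thesis using adm by (simp add: sum.union_disjoint distrib_left J_ideal_add)
qed

lemma mult_power_diff_in_J_ideal:
  assumes "D * (L - L') \<in> J_ideal n" "D \<in> polyR n" "L \<in> polyR n" "L' \<in> polyR n"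
  shows "D * L ^ k - D * L' ^ k \<in> (J_ideal n :: 'k::comm_ring_1 mpoly set)"
proof (induction k)
  case (Suc k)
  have "D * L ^ Suc k - D * L' ^ Suc k = (D * L ^ k - D * L' ^ k) * L + L' ^ k * (D * (L - L'))"
    by (simp add: algebra_simps)
  moreover have "(D * L ^ k - D * L' ^ k) * L \<in> J_ideal n"
    using Suc.IH assms(3) by (rule J_ideal_mult_right)
  moreover have "L' ^ k * (D * (L - L')) \<in> J_ideal n"
    using assms(1) by (rule J_ideal_mult) (simp add: assms(4))
  ultimately show ?case by (simp add: J_ideal_add)
qed simp

lemma sum_vars_power_in_J_ideal:
  assumes "finite U" "U \<subseteq> {1..n}" "card U < k"
  shows "(\<Sum>i\<in>U. var i) ^ k \<in> (J_ideal n :: 'k::comm_ring_1 mpoly set)"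
  using assms
proof (induction U arbitrary: k rule: finite_induct)
  case (insert a U)
  let ?L = "\<Sum>i\<in>U. var i :: 'k mpoly"
  have a: "a \<in> {1..n}" and U: "U \<subseteq> {1..n}" using insert by auto
  then have "?L \<in> polyR n" by (rule_tac sum_vars_polyR)
  then obtain c where c: "c \<in> polyR n"
    "(?L + var a) ^ k = ?L ^ k + of_nat k * var a * ?L ^ (k - 1) + (var a)^2 * c"
    using binomial_mod_square a by (metis polyR_var)
  have "(\<Sum>i\<in>insert a U. var i) ^ k = ?L ^ k + of_nat k * var a * ?L ^ (k - 1) + c * (var a)^2"
    using c insert by (simp add: add.commute mult.commute)
  moreover have "card U < k" "card U < k - 1" using insert by auto
  then have "?L ^ k \<in> J_ideal n" "?L ^ (k - 1) \<in> J_ideal n"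
    using insert.IH[OF U] by auto
  ultimately show ?case using a c by (auto intro!: J_ideal_add J_ideal_mult mult_var_square_in_J_ideal)
qed (simp add: power_0_left)

lemma D_gens_subset_colon_ideal: "D_gens n d \<subseteq> (colon_ideal n d :: 'k::comm_ring_1 mpoly set)"
proof
  fix p :: "'k mpoly" assume "p \<in> D_gens n d"
  then obtain M ps where p: "p = D_poly M ps" and adm: "D_admissible n M ps"
    and cnt: "n < card M + 2 * length ps + d"
    by (auto simp: D_gens_def)
  define F where "F = M \<union> set (pair_indices ps)"
  define U where "U = {1..n} - F"
  have F: "F \<subseteq> {1..n}" "finite F" using adm by (auto simp: D_admissible_def F_def)
  have "card U = n - card F" using F by (simp add: U_def card_Diff_subset)
  then have card_U: "card U < d"
    using cnt card_D_admissible_support[OF adm] card_mono[OF _ F(1)] by (simp add: F_def)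
  have D: "D_poly M ps \<in> (polyR n :: 'k mpoly set)" using adm by (rule D_poly_polyR)
  have L_U: "(\<Sum>i\<in>U. var i) \<in> (polyR n :: 'k mpoly set)" by (rule sum_vars_polyR) (auto simp: U_def)
  have "(ell n :: 'k mpoly) = (\<Sum>i\<in>F. var i) + (\<Sum>i\<in>U. var i)"
    unfolding ell_def U_def using F by (metis finite_atLeastAtMost sum.subset_diff add.commute)
  then have "D_poly M ps * (ell n - (\<Sum>i\<in>U. var i)) \<in> (J_ideal n :: 'k mpoly set)"
    using D_poly_mult_sum_in_J_ideal[OF adm] by (simp add: F_def)
  then have "D_poly M ps * ell n ^ d - D_poly M ps * (\<Sum>i\<in>U. var i) ^ d \<in> (J_ideal n :: 'k mpoly set)"
    using D L_U by (intro mult_power_diff_in_J_ideal) auto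
  moreover have "D_poly M ps * (\<Sum>i\<in>U. var i) ^ d \<in> (J_ideal n :: 'k mpoly set)"
    using sum_vars_power_in_J_ideal[of U n d] card_U D by (intro J_ideal_mult) (auto simp: U_def)
  ultimately have "D_poly M ps * ell n ^ d \<in> (J_ideal n :: 'k mpoly set)"
    by (metis J_ideal_add diff_add_cancel)
  then show "p \<in> colon_ideal n d" using p D by (simp add: colon_ideal_def)
qed

lemma D_ideal_subset_colon_ideal: "D_ideal n d \<subseteq> (colon_ideal n d :: 'k::comm_ring_1 mpoly set)"
  unfolding D_ideal_def
proof (rule ideal_gen_least)
  show "J_gens n \<union> D_gens n d \<subseteq> (colon_ideal n d :: 'k mpoly set)"
    using J_ideal_subset_colon_ideal D_gens_subset_colon_ideal ideal_gen_base[of _ "J_gens n" n]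
    unfolding J_ideal_def by blast
qed (auto intro: colon_ideal_add colon_ideal_mult J_ideal_subset_colon_ideal[THEN subsetD])

lemma J_ideal_subset_D_ideal: "J_ideal n \<subseteq> (D_ideal n d :: 'k::comm_ring_1 mpoly set)"
  unfolding J_ideal_def D_ideal_def by (rule ideal_gen_mono) auto

lemma D_gens_subset_D_ideal: "D_gens n d \<subseteq> (D_ideal n d :: 'k::comm_ring_1 mpoly set)"
  unfolding D_ideal_def by (auto intro: ideal_gen_base)

lemma D_ideal_zero [simp]: "0 \<in> D_ideal n d"
  and D_ideal_add: "p \<in> D_ideal n d \<Longrightarrow> q \<in> D_ideal n d \<Longrightarrow> p + q \<in> D_ideal n d"
  and D_ideal_diff: "p \<in> D_ideal n d \<Longrightarrow> q \<in> D_ideal n d \<Longrightarrow> p - q \<in> D_ideal n d"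
  and D_ideal_mult: "p \<in> D_ideal n d \<Longrightarrow> r \<in> polyR n \<Longrightarrow> r * p \<in> D_ideal n d"
  and D_ideal_sum: "(\<And>i. i \<in> A \<Longrightarrow> f i \<in> D_ideal n d) \<Longrightarrow> sum f A \<in> D_ideal n d"
  unfolding D_ideal_def by (simp_all add: ideal_gen_add ideal_gen_diff ideal_gen_mult ideal_gen_sum)

lemma D_ideal_subset_Suc: "D_ideal N d \<subseteq> (D_ideal (Suc N) (Suc d) :: 'k::comm_ring_1 mpoly set)"
  unfolding D_ideal_def
proof (rule ideal_gen_mono)
  have "D_admissible (Suc N) M ps" if "D_admissible N M ps" for M ps
    using that by (auto simp: D_admissible_def)
  then have "D_gens N d \<subseteq> (D_gens (Suc N) (Suc d) :: 'k mpoly set)"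
    by (fastforce simp: D_gens_def)
  then show "J_gens N \<union> D_gens N d \<subseteq> (J_gens (Suc N) \<union> D_gens (Suc N) (Suc d) :: 'k mpoly set)"
    by (auto simp: J_gens_def)
qed simp

lemma var_Suc_mult_D_poly:
  assumes adm: "D_admissible N M ps" and cnt: "N < card M + 2 * length ps + d"
  shows "var (Suc N) * D_poly M ps \<in> (D_gens (Suc N) d :: 'k::comm_ring_1 mpoly set)"
proof -
  have "Suc N \<notin> M" using adm by (auto simp: D_admissible_def)
  then have "var (Suc N) * D_poly M ps = (D_poly (insert (Suc N) M) ps :: 'k mpoly)"
    and "Suc N < card (insert (Suc N) M) + 2 * length ps + d"
    using adm cnt by (simp_all add: D_poly_def D_admissible_def mult.assoc)
  moreover have "D_admissible (Suc N) (insert (Suc N) M) ps"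
    using adm by (auto simp: D_admissible_def)
  ultimately show ?thesis by (auto simp: D_gens_def)
qed

lemma var_Suc_mult_D_ideal:
  assumes "w \<in> D_ideal N d"
  shows "var (Suc N) * w \<in> (D_ideal (Suc N) d :: 'k::comm_ring_1 mpoly set)"
proof -
  let ?x = "var (Suc N) :: 'k mpoly"
  have "D_ideal N d \<subseteq> {w. ?x * w \<in> D_ideal (Suc N) d}"
    unfolding D_ideal_def[of N]
  proof (rule ideal_gen_least)
    have "?x * var i ^ 2 \<in> D_ideal (Suc N) d" if "i \<in> {1..N}" for i
      using that by (intro mult_var_square_in_J_ideal J_ideal_subset_D_ideal[THEN subsetD]) auto
    then have "J_gens N \<subseteq> {w. ?x * w \<in> D_ideal (Suc N) d}"
      by (auto simp: J_gens_def)
    moreover have "D_gens N d \<subseteq> {w. ?x * w \<in> D_ideal (Suc N) d}"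
      using var_Suc_mult_D_poly D_gens_subset_D_ideal by (fastforce simp: D_gens_def)
    ultimately show "J_gens N \<union> D_gens N d \<subseteq> {w. ?x * w \<in> D_ideal (Suc N) d}"
      by blast
  next
    fix r p :: "'k mpoly"
    assume "r \<in> polyR N" "p \<in> {w. ?x * w \<in> D_ideal (Suc N) d}"
    then have "r * (?x * p) \<in> D_ideal (Suc N) d"
      using polyR_subset_Suc by (auto intro: D_ideal_mult)
    then show "r * p \<in> {w. ?x * w \<in> D_ideal (Suc N) d}" by (simp add: algebra_simps)
  qed (auto simp: distrib_left intro: D_ideal_add)
  then show ?thesis using assms by blast
qed

text \<open>Modulo D_ideal (N+1) d, multiplying D(M, P) by x_u for a variable x_u not occurring in it is
  the same as multiplying it by x = x_{N+1}, since (x_u - x) D(M, P) = D(M, P (u, N+1)).\<close>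
lemma ell_mult_D_poly_Suc:
  fixes ps :: "(nat \<times> nat) list"
  assumes adm: "D_admissible N M ps" and cnt: "N < card M + 2 * length ps + Suc d"
  shows "\<exists>h \<in> polyR N. ell N * D_poly M ps - var (Suc N) * h \<in> (D_ideal (Suc N) d :: 'k::comm_ring_1 mpoly set)"
proof -
  let ?x = "var (Suc N) :: 'k mpoly" and ?D = "D_poly M ps :: 'k mpoly"
  define F where "F = M \<union> set (pair_indices ps)"
  define U where "U = {1..N} - F"
  have "F \<subseteq> {1..N}" using adm by (auto simp: D_admissible_def F_def)
  then have "(ell N :: 'k mpoly) = (\<Sum>i\<in>F. var i) + (\<Sum>i\<in>U. var i)"
    unfolding ell_def U_def by (metis finite_atLeastAtMost sum.subset_diff add.commute)
  then have eq: "ell N * ?D - ?x * (\<Sum>u\<in>U. ?D) = ?D * (\<Sum>i\<in>F. var i) + (\<Sum>u\<in>U. (var u - ?x) * ?D)"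
    by (simp add: algebra_simps sum_distrib_left sum_distrib_right sum_subtractf)
  have "?D * (\<Sum>i\<in>F. var i) \<in> D_ideal (Suc N) d"
    using D_poly_mult_sum_in_J_ideal[OF adm] J_ideal_subset_Suc[of N] J_ideal_subset_D_ideal[of "Suc N" d]
    unfolding F_def by blast
  moreover have "(var u - ?x) * ?D \<in> D_ideal (Suc N) d" if "u \<in> U" for u
  proof -
    have "(var u - ?x) * ?D = D_poly M ((u, Suc N) # ps)"
      by (simp add: D_poly_def algebra_simps)
    moreover have "D_admissible (Suc N) M ((u, Suc N) # ps)"
      using adm that unfolding D_admissible_def U_def F_def by auto
    ultimately show ?thesis
      using cnt D_gens_subset_D_ideal unfolding D_gens_def by fastforce
  qed
  ultimately have "ell N * ?D - ?x * (\<Sum>u\<in>U. ?D) \<in> D_ideal (Suc N) d"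
    unfolding eq by (intro D_ideal_add D_ideal_sum) auto
  moreover have "(\<Sum>u\<in>U. ?D) \<in> polyR N" using D_poly_polyR[OF adm] by (intro polyR_sum)
  ultimately show ?thesis by blast
qed

lemma ell_mult_D_ideal_Suc:
  assumes "w \<in> D_ideal N (Suc d)"
  shows "\<exists>h \<in> polyR N. ell N * w - var (Suc N) * h \<in> (D_ideal (Suc N) d :: 'k::comm_ring_1 mpoly set)"
proof -
  let ?x = "var (Suc N) :: 'k mpoly"
  let ?I = "{w. \<exists>h \<in> polyR N. ell N * w - ?x * h \<in> D_ideal (Suc N) d}"
  have "D_ideal N (Suc d) \<subseteq> ?I"
    unfolding D_ideal_def[of N]
  proof (rule ideal_gen_least)
    have "J_gens N \<subseteq> ?I"
    proof
      fix g :: "'k mpoly" assume "g \<in> J_gens N"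
      then obtain i where "i \<in> {1..N}" "g = var i ^ 2" by (auto simp: J_gens_def)
      then have "ell N * g - ?x * 0 \<in> D_ideal (Suc N) d"
        using polyR_subset_Suc[of N]
        by (auto intro!: mult_var_square_in_J_ideal J_ideal_subset_D_ideal[THEN subsetD])
      then show "g \<in> ?I" using polyR_zero by blast
    qed
    moreover have "D_gens N (Suc d) \<subseteq> ?I"
      using ell_mult_D_poly_Suc by (fastforce simp: D_gens_def)
    ultimately show "J_gens N \<union> D_gens N (Suc d) \<subseteq> ?I" by blast
  next
    show "0 \<in> ?I" by (auto intro: bexI[of _ 0])
  next
    fix p q :: "'k mpoly" assume "p \<in> ?I" "q \<in> ?I"
    then obtain hp hq where "hp \<in> polyR N" "ell N * p - ?x * hp \<in> D_ideal (Suc N) d"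
      "hq \<in> polyR N" "ell N * q - ?x * hq \<in> D_ideal (Suc N) d" by blast
    moreover have "ell N * (p + q) - ?x * (hp + hq) = (ell N * p - ?x * hp) + (ell N * q - ?x * hq)"
      by (simp add: algebra_simps)
    ultimately show "p + q \<in> ?I" by (auto intro!: bexI[of _ "hp + hq"] D_ideal_add)
  next
    fix r p :: "'k mpoly" assume r: "r \<in> polyR N" and "p \<in> ?I"
    then obtain h where h: "h \<in> polyR N" "ell N * p - ?x * h \<in> D_ideal (Suc N) d" by blast
    have "r * (ell N * p - ?x * h) \<in> D_ideal (Suc N) d"
      using h r polyR_subset_Suc by (auto intro: D_ideal_mult)
    moreover have "r * (ell N * p - ?x * h) = ell N * (r * p) - ?x * (r * h)"
      by (simp add: algebra_simps)
    ultimately show "r * p \<in> ?I" using r h by (auto intro!: bexI[of _ "r * h"])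
  qed
  then show ?thesis using assms by blast
qed

lemma ideal_gen_cancel_of_nat:
  fixes f :: "'k::field_char_0 mpoly"
  assumes "of_nat d * f \<in> ideal_gen n S" "d \<noteq> 0"
  shows "f \<in> ideal_gen n S"
proof -
  have "Poly_Mapping.single 0 (inverse (of_nat d)) * Poly_Mapping.single 0 (of_nat d) = (1 :: 'k mpoly)"
    using assms(2) by (simp only: mult_single) simp
  then have "Poly_Mapping.single 0 (inverse (of_nat d)) * (of_nat d * f) = f"
    by (simp add: mult.assoc[symmetric])
  moreover have "Poly_Mapping.single 0 (inverse (of_nat d)) * (of_nat d * f) \<in> ideal_gen n S"
    by (rule ideal_gen_mult[OF assms(1) polyR_const])
  ultimately show ?thesis by (simp only:)
qed

lemma colon_ideal_Suc_subset_D_ideal: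
  fixes f :: "'k::field_char_0 mpoly"
  assumes IH: "\<And>d. colon_ideal N d \<subseteq> (D_ideal N d :: 'k mpoly set)"
    and f: "f \<in> colon_ideal (Suc N) d"
  shows "f \<in> D_ideal (Suc N) d"
proof (cases d)
  case 0
  then show ?thesis using f J_ideal_subset_D_ideal by (auto simp: colon_ideal_def)
next
  case (Suc e)
  let ?x = "var (Suc N) :: 'k mpoly" and ?L = "ell N :: 'k mpoly"
  obtain g h0 h1 where gh: "g \<in> polyR N" "h0 \<in> polyR N" "h1 \<in> polyR (Suc N)"
    and f_eq: "f = g + ?x * h0 + ?x^2 * h1"
    using f polyR_Suc_decomp[of f N] unfolding colon_ideal_def by auto
  note coeffs = colon_ideal_Suc_coeffs[OF gh f[unfolded f_eq Suc]]
  have u: "h0 * ?L + of_nat d * g \<in> D_ideal (Suc N) d"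
    using IH coeffs(2) D_ideal_subset_Suc Suc by blast
  obtain h2 where h2: "h2 \<in> polyR N" "?L * h0 - ?x * h2 \<in> D_ideal (Suc N) d"
    using ell_mult_D_ideal_Suc[of h0 N d] IH coeffs(3) Suc by blast
  define h where "h = of_nat d * h0 - h2"
  define w where "w = h0 * ?L + of_nat d * g - (?L * h0 - ?x * h2)"
  have h: "h \<in> polyR N" using gh h2 by (simp add: h_def)
  have w: "w \<in> D_ideal (Suc N) d" unfolding w_def using u h2(2) by (rule D_ideal_diff)
  have x2: "of_nat d * h1 * ?x^2 \<in> J_ideal (Suc N)"
    using gh(3) by (intro mult_var_square_in_J_ideal) auto
  have df: "of_nat d * f = w + ?x * h + of_nat d * h1 * ?x^2"
    unfolding f_eq h_def w_def by (simp add: algebra_simps)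
  have "?x * h \<in> colon_ideal (Suc N) d"
  proof -
    have "?x * h = of_nat d * f - w - of_nat d * h1 * ?x^2" using df by simp
    moreover have "of_nat d * f \<in> colon_ideal (Suc N) d" using f by (intro colon_ideal_mult) simp_all
    moreover have "w \<in> colon_ideal (Suc N) d" using w D_ideal_subset_colon_ideal by blast
    moreover have "of_nat d * h1 * ?x^2 \<in> colon_ideal (Suc N) d" using x2 J_ideal_subset_colon_ideal by blast
    ultimately show ?thesis by (simp add: colon_ideal_diff)
  qed
  then have "h \<in> colon_ideal N d"
    using h Suc colon_ideal_of_var_Suc_mult by blast
  then have "?x * h \<in> D_ideal (Suc N) d" using IH var_Suc_mult_D_ideal by blast
  then have "of_nat d * f \<in> D_ideal (Suc N) d"
    unfolding df using w x2 J_ideal_subset_D_ideal by (auto intro!: D_ideal_add)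
  then show ?thesis using Suc ideal_gen_cancel_of_nat unfolding D_ideal_def by blast
qed

lemma colon_ideal_subset_D_ideal: "colon_ideal n d \<subseteq> (D_ideal n d :: 'k::field_char_0 mpoly set)"
proof (induction n arbitrary: d)
  case 0
  show ?case
  proof (cases d)
    case 0
    then show ?thesis using J_ideal_subset_D_ideal by (auto simp: colon_ideal_def)
  next
    case (Suc e)
    have "D_admissible 0 {} []" by (simp add: D_admissible_def)
    then have "D_poly {} [] \<in> (D_gens 0 d :: 'k mpoly set)" using Suc by (force simp: D_gens_def)
    then have "(1 :: 'k mpoly) \<in> D_ideal 0 d" using D_gens_subset_D_ideal by (auto simp: D_poly_def)
    then show ?thesis using D_ideal_mult[of 1 0 d] by (force simp: colon_ideal_def)
  qed
next
  case (Suc N)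
  then show ?case using colon_ideal_Suc_subset_D_ideal by blast
qed

theorem colon_ideal_eq_D_ideal: "colon_ideal n d = (D_ideal n d :: 'k::field_char_0 mpoly set)"
  using colon_ideal_subset_D_ideal D_ideal_subset_colon_ideal by blast

section \<open>The permutation action\<close>

definition perm_monomial :: "(nat \<Rightarrow> nat) \<Rightarrow> (nat \<Rightarrow>\<^sub>0 nat) \<Rightarrow> 'k::comm_ring_1 mpoly" where
  "perm_monomial \<sigma> m = (\<Prod>i \<in> Poly_Mapping.keys m. var (\<sigma> i) ^ Poly_Mapping.lookup m i)"

lemma perm_act_superset:
  assumes "finite S" "Poly_Mapping.keys p \<subseteq> S"
  shows "perm_act \<sigma> (p :: 'k::comm_ring_1 mpoly) =
    (\<Sum>m \<in> S. Poly_Mapping.single 0 (Poly_Mapping.lookup p m) * perm_monomial \<sigma> m)"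
  unfolding perm_act_def perm_monomial_def[symmetric]
  by (rule sum.mono_neutral_left) (use assms in \<open>auto simp: in_keys_iff\<close>)

lemma perm_monomial_superset:
  assumes "finite S" "Poly_Mapping.keys m \<subseteq> S"
  shows "perm_monomial \<sigma> m = (\<Prod>i \<in> S. (var (\<sigma> i) :: 'k::comm_ring_1 mpoly) ^ Poly_Mapping.lookup m i)"
  unfolding perm_monomial_def
  by (rule prod.mono_neutral_left) (use assms in \<open>auto simp: in_keys_iff\<close>)

lemma perm_monomial_add:
  "perm_monomial \<sigma> (m1 + m2) = (perm_monomial \<sigma> m1 * perm_monomial \<sigma> m2 :: 'k::comm_ring_1 mpoly)"
proof -
  let ?S = "Poly_Mapping.keys m1 \<union> Poly_Mapping.keys m2"
  have "perm_monomial \<sigma> (m1 + m2) = (\<Prod>i \<in> ?S. (var (\<sigma> i) :: 'k mpoly) ^ Poly_Mapping.lookup (m1 + m2) i)"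
    using keys_add[of m1 m2] by (intro perm_monomial_superset) auto
  also have "\<dots> = (\<Prod>i \<in> ?S. (var (\<sigma> i) :: 'k mpoly) ^ Poly_Mapping.lookup m1 i) *
      (\<Prod>i \<in> ?S. (var (\<sigma> i) :: 'k mpoly) ^ Poly_Mapping.lookup m2 i)"
    by (simp add: lookup_add power_add prod.distrib)
  also have "\<dots> = perm_monomial \<sigma> m1 * perm_monomial \<sigma> m2"
    by (subst (1 2) perm_monomial_superset[of ?S]) auto
  finally show ?thesis .
qed

lemma perm_act_add: "perm_act \<sigma> (p + q) = perm_act \<sigma> p + perm_act \<sigma> (q :: 'k::comm_ring_1 mpoly)"
proof -
  let ?S = "Poly_Mapping.keys p \<union> Poly_Mapping.keys q"
  have "perm_act \<sigma> (p + q) =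
      (\<Sum>m \<in> ?S. Poly_Mapping.single 0 (Poly_Mapping.lookup (p + q) m) * perm_monomial \<sigma> m)"
    using keys_add[of p q] by (intro perm_act_superset) auto
  also have "\<dots> = (\<Sum>m \<in> ?S. Poly_Mapping.single 0 (Poly_Mapping.lookup p m) * perm_monomial \<sigma> m) +
      (\<Sum>m \<in> ?S. Poly_Mapping.single 0 (Poly_Mapping.lookup q m) * perm_monomial \<sigma> m)"
    by (simp add: lookup_add single_add distrib_right sum.distrib)
  also have "\<dots> = perm_act \<sigma> p + perm_act \<sigma> q"
    by (subst (1 2) perm_act_superset[of ?S]) auto
  finally show ?thesis .
qed

lemma perm_act_zero [simp]: "perm_act \<sigma> (0 :: 'k::comm_ring_1 mpoly) = 0"
  by (simp add: perm_act_def)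

lemma perm_act_sum: "perm_act \<sigma> (sum f A) = (\<Sum>a\<in>A. perm_act \<sigma> (f a :: 'k::comm_ring_1 mpoly))"
  by (induction A rule: infinite_finite_induct) (auto simp: perm_act_add)

lemma perm_act_single:
  "perm_act \<sigma> (Poly_Mapping.single m c) = Poly_Mapping.single 0 c * (perm_monomial \<sigma> m :: 'k::comm_ring_1 mpoly)"
  by (subst perm_act_superset[of "{m}"]) auto

lemma perm_act_mult: "perm_act \<sigma> (p * q) = perm_act \<sigma> p * perm_act \<sigma> (q :: 'k::comm_ring_1 mpoly)"
proof -
  let ?p = "\<lambda>m. Poly_Mapping.single m (Poly_Mapping.lookup p m)"
  let ?q = "\<lambda>m. Poly_Mapping.single m (Poly_Mapping.lookup q m)"
  have single_mult: "perm_act \<sigma> (?p m1 * ?q m2) = perm_act \<sigma> (?p m1) * perm_act \<sigma> (?q m2)" for m1 m2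
    by (simp add: mult_single perm_act_single perm_monomial_add algebra_simps)
  have "p * q = (\<Sum>m2\<in>Poly_Mapping.keys q. \<Sum>m1\<in>Poly_Mapping.keys p. ?p m1 * ?q m2)"
    by (subst (1) poly_mapping_eq_sum_single[of p], subst (1) poly_mapping_eq_sum_single[of q])
       (simp add: sum_distrib_left sum_distrib_right)
  then have "perm_act \<sigma> (p * q) = perm_act \<sigma> (\<Sum>m1\<in>Poly_Mapping.keys p. ?p m1) *
      perm_act \<sigma> (\<Sum>m2\<in>Poly_Mapping.keys q. ?q m2)"
    by (simp add: perm_act_sum single_mult sum_distrib_left sum_distrib_right)
  then show ?thesis by (simp only: poly_mapping_eq_sum_single[symmetric])
qed

lemma perm_act_diff: "perm_act \<sigma> (p - q) = perm_act \<sigma> p - perm_act \<sigma> (q :: 'k::comm_ring_1 mpoly)"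
  using perm_act_add[of \<sigma> "p - q" q] by (simp add: algebra_simps)

lemma perm_act_one [simp]: "perm_act \<sigma> (1 :: 'k::comm_ring_1 mpoly) = 1"
  using perm_act_single[of \<sigma> 0 "1::'k"] by (simp add: perm_monomial_def)

lemma perm_act_var [simp]: "perm_act \<sigma> (var i :: 'k::comm_ring_1 mpoly) = var (\<sigma> i)"
  unfolding var_def[of i] perm_act_single by (simp add: perm_monomial_def var_def[symmetric])

lemma perm_act_prod: "perm_act \<sigma> (prod f A) = (\<Prod>a\<in>A. perm_act \<sigma> (f a :: 'k::comm_ring_1 mpoly))"
  by (induction A rule: infinite_finite_induct) (auto simp: perm_act_mult)

section \<open>The S_n-orbit of the standard generator\<close>

definition map_pairs :: "('a \<Rightarrow> 'b) \<Rightarrow> ('a \<times> 'a) list \<Rightarrow> ('b \<times> 'b) list" where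
  "map_pairs \<sigma> ps = map (\<lambda>(a, b). (\<sigma> a, \<sigma> b)) ps"

lemma pair_indices_map_pairs: "pair_indices (map_pairs \<sigma> ps) = map \<sigma> (pair_indices ps)"
  by (induction ps) (auto simp: map_pairs_def)

lemma length_map_pairs [simp]: "length (map_pairs \<sigma> ps) = length ps"
  by (simp add: map_pairs_def)

lemma pair_indices_inj: "pair_indices ps = pair_indices qs \<Longrightarrow> ps = qs"
proof (induction ps arbitrary: qs)
  case Nil
  then show ?case by (cases qs) auto
next
  case (Cons p ps)
  then show ?case by (cases qs; cases p) (auto split: prod.splits)
qed

lemma perm_act_D_poly:
  assumes "inj_on \<sigma> M"
  shows "perm_act \<sigma> (D_poly M ps :: 'k::comm_ring_1 mpoly) = D_poly (\<sigma> ` M) (map_pairs \<sigma> ps)"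
proof -
  have "perm_act \<sigma> (pair_diff_prod ps :: 'k mpoly) = pair_diff_prod (map_pairs \<sigma> ps)"
    by (induction ps) (auto simp: map_pairs_def perm_act_mult perm_act_diff)
  then show ?thesis
    using assms by (simp add: D_poly_def perm_act_mult perm_act_prod prod.reindex)
qed

lemma D_admissible_permutes:
  assumes "D_admissible n M ps" "\<sigma> permutes {1..n}"
  shows "D_admissible n (\<sigma> ` M) (map_pairs \<sigma> ps)"
proof -
  have inj: "inj \<sigma>" and img: "\<sigma> ` {1..n} = {1..n}"
    using assms(2) by (simp_all add: permutes_inj permutes_image)
  note adm = D_admissibleD[OF assms(1)]
  have "\<sigma> ` M \<subseteq> {1..n}" using adm(2) img by blast
  moreover have "distinct (map \<sigma> (pair_indices ps))" using adm(3) inj by (simp add: distinct_map inj_on_def)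
  moreover have "set (map \<sigma> (pair_indices ps)) \<subseteq> {1..n}" using adm(4) img by auto
  moreover have "\<sigma> ` M \<inter> set (map \<sigma> (pair_indices ps)) = {}" using adm(5) inj by (auto simp: inj_def)
  ultimately show ?thesis using adm(1) unfolding D_admissible_def pair_indices_map_pairs by auto
qed

definition std_pairs :: "nat \<Rightarrow> (nat \<times> nat) list" where
  "std_pairs k = map (\<lambda>i. (2*i - 1, 2*i)) [1..<Suc k]"

text \<open>The generator of the theorem: (x_1 - x_2) ... (x_{r-1} - x_r) for r even and
  (x_1 - x_2) ... (x_{r-2} - x_{r-1}) x_r for r odd, where r = n - d + 1.\<close>
definition std_gen :: "nat \<Rightarrow> 'k::comm_ring_1 mpoly" where
  "std_gen r = D_poly (if odd r then {r} else {}) (std_pairs (r div 2))"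

lemma std_pairs_Suc: "std_pairs (Suc k) = std_pairs k @ [(2 * k + 1, 2 * k + 2)]"
  by (simp add: std_pairs_def)

lemma length_std_pairs [simp]: "length (std_pairs k) = k"
  by (simp add: std_pairs_def)

lemma pair_indices_std_pairs: "pair_indices (std_pairs k) = [1..<2*k+1]"
proof (induction k)
  case (Suc k)
  have "[1..<2 * Suc k + 1] = [1..<2*k+1] @ [2*k+1, 2*k+2]"
    by (simp add: upt_conv_Cons)
  then show ?case by (simp add: std_pairs_Suc Suc)
qed (simp add: std_pairs_def)

lemma pair_diff_prod_std_pairs:
  "pair_diff_prod (std_pairs k) = (\<Prod>i=1..k. var (2*i - 1) - (var (2*i) :: 'k::comm_ring_1 mpoly))"
  by (induction k) (simp_all add: std_pairs_def std_pairs_Suc[unfolded std_pairs_def] prod.cl_ivl_Suc)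

lemma D_admissible_std_gen:
  "1 \<le> r \<Longrightarrow> r \<le> n \<Longrightarrow> D_admissible n (if odd r then {r} else {}) (std_pairs (r div 2))"
  unfolding D_admissible_def pair_indices_std_pairs by auto

lemma exists_permutes_map_eq:
  "distinct xs \<Longrightarrow> distinct ys \<Longrightarrow> length xs = length ys \<Longrightarrow> set xs \<subseteq> S \<Longrightarrow> set ys \<subseteq> S \<Longrightarrow>
   \<exists>\<sigma>. \<sigma> permutes S \<and> map \<sigma> xs = ys"
proof (induction xs arbitrary: ys)
  case Nil
  then show ?case using permutes_id by fastforce
next
  case (Cons x xs)
  then obtain y ys' where ys: "ys = y # ys'" by (cases ys) auto
  then obtain \<tau> where \<tau>: "\<tau> permutes S" "map \<tau> xs = ys'" using Cons by auto
  have "\<tau> x \<in> S" "y \<in> S" using Cons.prems(4,5) \<tau>(1) ys by (simp_all add: permutes_in_image)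
  define \<sigma> where "\<sigma> = Transposition.transpose (\<tau> x) y \<circ> \<tau>"
  have "\<sigma> permutes S"
    unfolding \<sigma>_def using \<tau>(1) permutes_swap_id[OF \<open>\<tau> x \<in> S\<close> \<open>y \<in> S\<close>] by (rule permutes_compose)
  moreover have "\<sigma> w = \<tau> w" if "w \<in> set xs" for w
  proof -
    have "\<tau> w \<noteq> \<tau> x" using that Cons.prems(1) permutes_inj[OF \<tau>(1)] by (auto simp: inj_def)
    moreover have "\<tau> w \<noteq> y" using that Cons.prems(2) ys \<tau>(2) by auto
    ultimately show ?thesis by (simp add: \<sigma>_def transpose_def)
  qed
  then have "map \<sigma> xs = map \<tau> xs" by simp
  then have "map \<sigma> xs = ys'" using \<tau>(2) by simp
  ultimately show ?case using ys by (auto simp: \<sigma>_def)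
qed

lemma D_poly_in_orbit:
  assumes r: "1 \<le> r" "r \<le> n" and adm: "D_admissible n M ps"
    and card_M: "card M = r mod 2" and length_ps: "length ps = r div 2"
  shows "D_poly M ps \<in> (Sn_orbit n (std_gen r) :: 'k::comm_ring_1 mpoly set)"
proof -
  let ?k = "r div 2" and ?M0 = "if odd r then {r} else {}" and ?m0 = "if odd r then [r] else []"
  note adm' = D_admissibleD[OF adm]
  obtain ml where ml: "set ml = M" "distinct ml" "length ml = r mod 2"
    using adm'(1) card_M by (metis distinct_card finite_distinct_list)
  have "distinct (pair_indices (std_pairs ?k) @ ?m0)" "set (pair_indices (std_pairs ?k) @ ?m0) \<subseteq> {1..n}"
    using r by (auto simp: pair_indices_std_pairs)
  moreover have "distinct (pair_indices ps @ ml)" "set (pair_indices ps @ ml) \<subseteq> {1..n}"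
    using adm' ml by auto
  moreover have "length (pair_indices (std_pairs ?k) @ ?m0) = length (pair_indices ps @ ml)"
    using ml length_ps by simp
  ultimately obtain \<sigma> where \<sigma>: "\<sigma> permutes {1..n}"
    and "map \<sigma> (pair_indices (std_pairs ?k) @ ?m0) = pair_indices ps @ ml"
    using exists_permutes_map_eq by blast
  then have "map \<sigma> (pair_indices (std_pairs ?k)) = pair_indices ps" "map \<sigma> ?m0 = ml"
    using length_ps by (simp_all add: append_eq_append_conv)
  then have "map_pairs \<sigma> (std_pairs ?k) = ps" "\<sigma> ` ?M0 = M"
    using ml(1) by (auto simp: pair_indices_map_pairs intro: pair_indices_inj split: if_splits)
  moreover have "inj \<sigma>" using \<sigma> by (rule permutes_inj)
  ultimately have "perm_act \<sigma> (std_gen r) = (D_poly M ps :: 'k mpoly)"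
    by (simp add: std_gen_def perm_act_D_poly inj_on_def)
  then show ?thesis using \<sigma> unfolding Sn_orbit_def by (auto intro!: exI[of _ \<sigma>])
qed

lemma D_admissible_prefix:
  assumes "D_admissible n M (ps0 @ ps1)" "M' \<subseteq> M \<union> set (pair_indices ps1)"
  shows "D_admissible n M' ps0"
proof -
  note adm = D_admissibleD[OF assms(1)]
  have "finite M'" using assms(2) adm(1) by (meson finite_Un finite_set finite_subset)
  then show ?thesis using assms(2) adm(2-5) by (auto simp: D_admissible_def)
qed

lemma D_poly_in_ideal_if_minimal_pairs:
  assumes minimal: "\<And>M ps. D_admissible n M ps \<Longrightarrow> card M = r mod 2 \<Longrightarrow> length ps = r div 2 \<Longrightarrow>
      D_poly M ps \<in> ideal_gen n T"
    and adm: "D_admissible n M ps" and r: "r \<le> card M + 2 * length ps" and k: "r div 2 \<le> length ps"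
  shows "D_poly M ps \<in> (ideal_gen n T :: 'k::comm_ring_1 mpoly set)"
proof -
  let ?k = "r div 2"
  define ps0 where "ps0 = take ?k ps"
  define ps1 where "ps1 = drop ?k ps"
  have ps: "ps = ps0 @ ps1" and length_ps0: "length ps0 = ?k"
    using k by (simp_all add: ps0_def ps1_def)
  note adm' = D_admissibleD[OF adm]
  have adm_split: "D_admissible n M (ps0 @ ps1)" using adm ps by simp
  have P1: "pair_diff_prod ps1 \<in> (polyR n :: 'k mpoly set)"
    using adm'(4) by (intro pair_diff_prod_polyR) (auto simp: ps)
  show ?thesis
  proof (cases "r mod 2 \<le> card M")
    case True
    then obtain M0 where M0_sub: "M0 \<subseteq> M" "card M0 = r mod 2" by (rule obtain_subset_with_card_n)
    have "D_admissible n M0 ps0" using D_admissible_prefix[OF adm_split, of M0] M0_sub by auto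
    then have "D_poly M0 ps0 \<in> (ideal_gen n T :: 'k mpoly set)"
      using length_ps0 M0_sub by (intro minimal)
    moreover have "(D_poly M ps :: 'k mpoly) = ((\<Prod>m\<in>M - M0. var m) * pair_diff_prod ps1) * D_poly M0 ps0"
      unfolding D_poly_def ps prod.subset_diff[OF M0_sub(1) adm'(1)] by (simp add: algebra_simps)
    moreover have "(\<Prod>m\<in>M - M0. var m) \<in> (polyR n :: 'k mpoly set)"
      using adm'(2) by (intro prod_vars_polyR) auto
    ultimately show ?thesis using P1 by (simp add: ideal_gen_mult)
  next
    case False
    then have "card M = 0" "odd r" by presburger+
    then have odd_empty: "odd r" "M = {}" using adm'(1) by simp_all
    then have "r \<le> 2 * length ps" using r by simp
    then have "?k < length ps" using odd_empty(1) by presburger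
    then obtain a b ps2 where ps1: "ps1 = (a, b) # ps2" by (cases ps1) (auto simp: ps1_def)
    have adm_split': "D_admissible n M (ps0 @ (a, b) # ps2)" using adm_split ps1 by simp
    have "D_poly {a} ps0 \<in> (ideal_gen n T :: 'k mpoly set)" "D_poly {b} ps0 \<in> (ideal_gen n T :: 'k mpoly set)"
      using D_admissible_prefix[OF adm_split', of "{a}"] D_admissible_prefix[OF adm_split', of "{b}"]
        length_ps0 odd_empty by (auto intro!: minimal simp: odd_iff_mod_2_eq_one)
    then have "D_poly {a} ps0 - D_poly {b} ps0 \<in> (ideal_gen n T :: 'k mpoly set)" by (rule ideal_gen_diff)
    moreover have "pair_diff_prod ps2 \<in> (polyR n :: 'k mpoly set)"
      using adm'(4) by (intro pair_diff_prod_polyR) (auto simp: ps ps1)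
    moreover have "(D_poly M ps :: 'k mpoly) = pair_diff_prod ps2 * (D_poly {a} ps0 - D_poly {b} ps0)"
      using odd_empty by (simp add: D_poly_def ps ps1 algebra_simps)
    ultimately show ?thesis by (simp add: ideal_gen_mult)
  qed
qed

text \<open>Two factors x_a x_b of the monomial part are traded for a pair, via
  x_a x_b D = x_a^2 D - x_a (x_a - x_b) D.\<close>
lemma D_poly_in_ideal_if_minimal:
  assumes J: "J_gens n \<subseteq> T"
    and minimal: "\<And>M ps. D_admissible n M ps \<Longrightarrow> card M = r mod 2 \<Longrightarrow> length ps = r div 2 \<Longrightarrow>
      D_poly M ps \<in> ideal_gen n T"
    and adm: "D_admissible n M ps" and r: "r \<le> card M + 2 * length ps"
  shows "D_poly M ps \<in> (ideal_gen n T :: 'k::comm_ring_1 mpoly set)"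
  using adm r
proof (induction "card M" arbitrary: M ps rule: less_induct)
  case less
  note adm' = D_admissibleD[OF less.prems(1)]
  show ?case
  proof (cases "r div 2 \<le> length ps")
    case True
    then show ?thesis using D_poly_in_ideal_if_minimal_pairs[OF minimal less.prems] by blast
  next
    case False
    then have "2 \<le> card M" using less.prems(2) by linarith
    then obtain a b where ab: "a \<in> M" "b \<in> M" "a \<noteq> b"
      using card_le_Suc0_iff_eq[OF adm'(1)] by (metis One_nat_def not_less_eq_eq numeral_2_eq_2)
    define M' where "M' = M - {a, b}"
    have card_M': "card M' = card M - 2" using ab adm'(1) by (simp add: M'_def card_Diff_subset)
    have adm_M': "D_admissible n M' ps" "D_admissible n M' ((a, b) # ps)"
      using adm' ab unfolding D_admissible_def M'_def by auto
    have a: "a \<in> {1..n}" using ab adm' by auto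
    have "D_poly M' ((a, b) # ps) \<in> (ideal_gen n T :: 'k mpoly set)"
      using less.hyps[of M'] adm_M'(2) card_M' less.prems(2) \<open>2 \<le> card M\<close> by simp
    moreover have "D_poly M' ps * var a ^ 2 \<in> (ideal_gen n T :: 'k mpoly set)"
      using mult_var_square_in_J_ideal[OF a D_poly_polyR[OF adm_M'(1)]] ideal_gen_mono[OF J, of n n]
      by (auto simp: J_ideal_def)
    moreover have "(D_poly M ps :: 'k mpoly) = D_poly M' ps * var a ^ 2 - var a * D_poly M' ((a, b) # ps)"
    proof -
      have "M = insert a (insert b M')" "a \<notin> insert b M'" "b \<notin> M'" "finite M'"
        using ab adm'(1) by (auto simp: M'_def)
      then have prod_M: "(\<Prod>m\<in>M. var m :: 'k mpoly) = var a * var b * (\<Prod>m\<in>M'. var m)"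
        by (simp add: mult.assoc)
      show ?thesis unfolding D_poly_def pair_diff_prod_simps(2) prod_M
        by (simp add: algebra_simps power2_eq_square)
    qed
    ultimately show ?thesis using a by (simp add: ideal_gen_diff ideal_gen_mult)
  qed
qed

lemma D_ideal_eq_orbit_ideal:
  assumes r: "1 \<le> r" "r \<le> n"
  shows "D_ideal n (n + 1 - r) = ideal_gen n (J_gens n \<union> Sn_orbit n (std_gen r :: 'k::comm_ring_1 mpoly))"
    (is "_ = ideal_gen n ?T")
proof
  show "D_ideal n (n + 1 - r) \<subseteq> ideal_gen n ?T"
    unfolding D_ideal_def
  proof (rule ideal_gen_subset)
    have "D_poly M ps \<in> ideal_gen n ?T"
      if adm: "D_admissible n M ps" and cnt: "n < card M + 2 * length ps + (n + 1 - r)" for M ps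
    proof (rule D_poly_in_ideal_if_minimal[OF _ _ adm])
      show "r \<le> card M + 2 * length ps" using cnt r by linarith
      fix M' ps' assume "D_admissible n M' ps'" "card M' = r mod 2" "length ps' = r div 2"
      then have "D_poly M' ps' \<in> Sn_orbit n (std_gen r)" by (rule D_poly_in_orbit[OF r])
      then show "D_poly M' ps' \<in> ideal_gen n ?T" by (blast intro: ideal_gen_base)
    qed blast
    moreover have "J_gens n \<subseteq> ideal_gen n ?T" by (blast intro: ideal_gen_base)
    ultimately show "J_gens n \<union> D_gens n (n + 1 - r) \<subseteq> ideal_gen n ?T"
      unfolding D_gens_def by blast
  qed
  show "ideal_gen n ?T \<subseteq> D_ideal n (n + 1 - r)"
    unfolding D_ideal_def
  proof (rule ideal_gen_subset)
    let ?M0 = "if odd r then {r} else {}"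
    have "perm_act \<sigma> (std_gen r) \<in> (D_gens n (n + 1 - r) :: 'k mpoly set)" if \<sigma>: "\<sigma> permutes {1..n}" for \<sigma>
    proof -
      have "inj \<sigma>" using \<sigma> by (rule permutes_inj)
      then have "perm_act \<sigma> (std_gen r) = (D_poly (\<sigma> ` ?M0) (map_pairs \<sigma> (std_pairs (r div 2))) :: 'k mpoly)"
        by (simp add: std_gen_def perm_act_D_poly inj_on_def)
      moreover have "card (\<sigma> ` ?M0) = card ?M0"
        using \<open>inj \<sigma>\<close> by (simp add: card_image inj_on_def)
      moreover have "card ?M0 + 2 * (r div 2) = r" by simp
      moreover have "D_admissible n (\<sigma> ` ?M0) (map_pairs \<sigma> (std_pairs (r div 2)))"
        using D_admissible_permutes[OF D_admissible_std_gen[OF r] \<sigma>] .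
      ultimately show ?thesis using r unfolding D_gens_def by force
    qed
    then have "Sn_orbit n (std_gen r) \<subseteq> (D_gens n (n + 1 - r) :: 'k mpoly set)"
      by (auto simp: Sn_orbit_def)
    then show "?T \<subseteq> ideal_gen n (J_gens n \<union> D_gens n (n + 1 - r))"
      by (blast intro: ideal_gen_base)
  qed
qed

lemma std_gen_even:
  "even r \<Longrightarrow> (std_gen r :: 'k::comm_ring_1 mpoly) = (\<Prod>i=1..r div 2. var (2*i - 1) - var (2*i))"
  by (simp add: std_gen_def D_poly_def pair_diff_prod_std_pairs)

lemma std_gen_odd:
  "odd r \<Longrightarrow> (std_gen r :: 'k::comm_ring_1 mpoly) = var r * (\<Prod>i=1..r div 2. var (2*i - 1) - var (2*i))"
  by (simp add: std_gen_def D_poly_def pair_diff_prod_std_pairs)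

theorem mainTheorem6:
  fixes n d :: nat
  assumes "0 < d" and "d \<le> n"
  shows "(odd (n + d) \<longrightarrow>
           (colon_ideal n d :: 'k::field_char_0 mpoly set) =
           ideal_gen n (J_gens n \<union>
             Sn_orbit n (\<Prod>i=1..(n - d + 1) div 2. var (2*i - 1) - var (2*i))))
       \<and> (even (n + d) \<longrightarrow>
           (colon_ideal n d :: 'k::field_char_0 mpoly set) =
           ideal_gen n (J_gens n \<union>
             Sn_orbit n (var (n - d + 1) * (\<Prod>i=1..(n - d) div 2. var (2*i - 1) - var (2*i)))))"
proof -
  have r: "1 \<le> n - d + 1" "n - d + 1 \<le> n" and d: "n + 1 - (n - d + 1) = d"
    using assms by auto
  have "(colon_ideal n d :: 'k mpoly set) = D_ideal n d"
    by (rule colon_ideal_eq_D_ideal)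
  also have "\<dots> = ideal_gen n (J_gens n \<union> Sn_orbit n (std_gen (n - d + 1)))"
    using D_ideal_eq_orbit_ideal[OF r] unfolding d .
  finally have colon: "(colon_ideal n d :: 'k mpoly set) = \<dots>" .
  have "(std_gen (n - d + 1) :: 'k mpoly) = (\<Prod>i=1..(n - d + 1) div 2. var (2*i - 1) - var (2*i))"
    if "odd (n + d)"
    using that assms by (intro std_gen_even) presburger
  moreover have "(std_gen (n - d + 1) :: 'k mpoly) = var (n - d + 1) * (\<Prod>i=1..(n - d) div 2. var (2*i - 1) - var (2*i))"
    if "even (n + d)"
  proof -
    have odd: "odd (n - d + 1)" and half: "(n - d + 1) div 2 = (n - d) div 2"
      using that assms by presburger+
    show ?thesis by (simp only: std_gen_odd[OF odd] half)
  qed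
  ultimately show ?thesis using colon by auto
qed

end
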